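(* Consider the following local training on device $k$. Let $\mathcal{D}_k$ be a finite dataset of $D_k$ labelled samples $(\bm{x},y)$ with labels in $\mathcal{C}=\{1,\dots,C\}$, and $\mathcal{D}_{k,c}\subseteq\mathcal{D}_k$ the samples of class $c$. The model is $\bm{w}_k=(\bm{u}_k,\bm{v}_k)$, with feature extractor $h_k(\bm{x};\bm{u}_k)\in\mathbb{R}^p$, and empirical loss $F_k(\bm{u}_k,\bm{v}_k)=\frac{1}{D_k}\sum_{(\bm{x},y)\in\mathcal{D}_k} f(\bm{x},y;\bm{w}_k)$. Given global class vectors $\bm{\Omega}_{c,t}\in\mathbb{R}^p$ ($c\in\mathcal{C}$) for round $t$, define the knowledge loss $L_k(\bm{u}) = \frac{1}{D_k}\sum_{c=1}^C\sum_{(\bm{x},y)\in\mathcal{D}_{k,c}}\frac12\|h_k(\bm{x};\bm{u})-\bm{\Omega}_{c,t}\|^2$. Starting from $\bm{u}_{k,t,0}=\bm{u}_{k,t}$, $\bm{v}_{k,t,0}=\bm{v}_{k,t}$, perform for $l=0,\dots,\tau-1$: $\bm{u}_{k,t,l+1} = \bm{u}_{k,t,l} - \eta_u\big(\nabla_{\bm{u}}F_k(\bm{u}_{k,t,l},\bm{v}_{k,t,l}) + \lambda\nabla L_k(\bm{u}_{k,t,l})\big)$, $\bm{v}_{k,t,l+1} = \bm{v}_{k,t,l} - \eta_v\nabla_{\bm{v}}F_k(\bm{u}_{k,t,l},\bm{v}_{k,t,l})$, and set $\bm{u}_{k,t+1}=\bm{u}_{k,t,\tau}$, $\bm{v}_{k,t+1}=\bm{v}_{k,t,\tau}$.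 Assume: (i) $F_k$ is continuously differentiable and $\nabla_{\bm{u}}F_k$ is $L_u$-Lipschitz in $\bm{u}$ and $L_{uv}$-Lipschitz in $\bm{v}$, $\nabla_{\bm{v}}F_k$ is $L_v$-Lipschitz in $\bm{v}$ and $L_{vu}$-Lipschitz in $\bm{u}$; (ii) $\|\nabla_{\bm{u}}F_k(\bm{u}_{k,t},\bm{v}_{k,t})\|^2\le G_1^2$ and $\|\nabla_{\bm{v}}F_k(\bm{u}_{k,t},\bm{v}_{k,t})\|^2\le G_2^2$ (uniformly over all iterates); (iii) $\|\nabla h_k(\bm{u}_k)\|^2\le\vartheta^2$ and $\|h_k(\bm{u}_k;\bm{x})\|^2\le\varsigma^2$. Let $\chi=\max\{L_{uv},L_{vu}\}/\sqrt{L_uL_v}$, and suppose $\eta_u\le \frac{1}{4\tau(1+\chi)L_u}$ and $\eta_v\le\frac{1}{2\tau(1+\chi)L_v}$. Then $$F_k(\bm{u}_{k,t+1},\bm{v}_{k,t+1}) - F_k(\bm{u}_{k,t},\bm{v}_{k,t}) \le \Big(2(1+\chi)L_u\eta_u^2\tau^2 - \tfrac12\eta_u\tau\Big)\|\nabla_{\bm{u}}F_k(\bm{u}_{k,t},\bm{v}_{k,t})\|^2 + \Big((1+\chi)L_v\eta_v^2\tau^2 - \tfrac12\eta_v\tau\Big)\|\nabla_{\bm{v}}F_k(\bm{u}_{k,t},\bm{v}_{k,t})\|^2 + A_1 + \tfrac54\eta_u\lambda^2\sum_{l=0}^{\tau-1}\|\nabla L_k(\bm{u}_{k,t,l})\|^2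 + 2\eta_u^2\lambda^2(3\eta_uL_u^2 + 2\eta_v\chi^2L_uL_v)\sum_{l=0}^{\tau-1}(\tau-l)\|\nabla L_k(\bm{u}_{k,t,l})\|^2,$$ where $A_1 = \tau(\tau+1)(2\tau+1)\Big(\eta_u^3G_1^2L_u^2 + \tfrac13\eta_v^3G_2^2L_v^2 + \big(\tfrac23\eta_uG_1^2 + \tfrac12\eta_vG_2^2\big)\eta_u\eta_v\chi^2L_uL_v\Big)$.
   Context: $f(\bm{x},y;\bm{w})$ is a sample-wise loss; $\lambda\ge0$ is a weight hyperparameter; $\tau$ is the number of local gradient steps; $\eta_u,\eta_v>0$ are learning rates; $\|\cdot\|$ is the Euclidean norm. *)

theory Defs
  imports "HOL-Analysis.Analysis"
begin

definition emp_loss :: "('x \<times> nat) set \<Rightarrow> ('x \<Rightarrow> nat \<Rightarrow> 'u \<Rightarrow> 'v \<Rightarrow> real) \<Rightarrow> 'u \<Rightarrow> 'v \<Rightarrow> real" where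
  "emp_loss D f u v = (1 / real (card D)) * (\<Sum>(x,y)\<in>D. f x y u v)"

definition knowledge_loss :: "('x \<times> nat) set \<Rightarrow> nat \<Rightarrow> ('x \<Rightarrow> 'u \<Rightarrow> 'h::real_normed_vector) \<Rightarrow> (nat \<Rightarrow> 'h) \<Rightarrow> 'u \<Rightarrow> real" where
  "knowledge_loss D C h \<Omega> u = (1 / real (card D)) *
     (\<Sum>c\<in>{1..C}. \<Sum>(x,y)\<in>{s\<in>D. snd s = c}. (1/2) * (norm (h x u - \<Omega> c))\<^sup>2)"

primrec local_iter :: "real \<Rightarrow> real \<Rightarrow> real \<Rightarrow> ('u \<Rightarrow> 'v \<Rightarrow> 'u::real_vector) \<Rightarrow> ('u \<Rightarrow> 'v \<Rightarrow> 'v::real_vector)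
   \<Rightarrow> ('u \<Rightarrow> 'u) \<Rightarrow> 'u \<Rightarrow> 'v \<Rightarrow> nat \<Rightarrow> 'u \<times> 'v" where
  "local_iter \<eta>u \<eta>v lam gu gv gL u0 v0 0 = (u0, v0)"
| "local_iter \<eta>u \<eta>v lam gu gv gL u0 v0 (Suc l) =
     (let (u, v) = local_iter \<eta>u \<eta>v lam gu gv gL u0 v0 l in
       (u - \<eta>u *\<^sub>R (gu u v + lam *\<^sub>R gL u), v - \<eta>v *\<^sub>R gv u v))"

end

theory Submission
  imports Defs
begin

(* Let U = u_tau - u_0 and V = v_tau - v_0. Integrating the gradient along the segment from
   (u_0, v_0) gives the two-block smoothness bound
     F(u_0 + U, v_0 + V) - F(u_0, v_0)
       <= grad_u F . U + grad_v F . V + (L_u |U|^2 + (L_uv + L_vu) |U| |V| + L_v |V|^2) / 2,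
   and AM-GM absorbs the mixed term into the factor 1 + chi. Unrolling the iteration,
   U = -eta_u (tau grad_u F(u_0, v_0) + W_u) and V = -eta_v (tau grad_v F(u_0, v_0) + W_v), where the
   drifts W_u, W_v collect the change of the gradients during the round (bounded through the
   Lipschitz hypotheses by O(eta tau^2 G)) and the knowledge-loss steps. Under the step-size
   conditions the bound becomes a nonnegative quadratic form in (|grad F|, |W|) plus multiples of
   |W_u|^2 and |W_v|^2, and Young's inequality splits these into A_1 and the 5/4 eta_u lambda^2 term.
   The last summand of the claimed bound is nonnegative and not needed. *)

lemma norm_diff_le_partial_lipschitz:
  fixes g :: "'a::real_normed_vector \<Rightarrow> 'b::real_normed_vector \<Rightarrow> 'c::real_normed_vector"
  assumes "\<And>u u' v. norm (g u v - g u' v) \<le> L1 * norm (u - u')"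
    and "\<And>u v v'. norm (g u v - g u v') \<le> L2 * norm (v - v')"
  shows "norm (g u v - g u' v') \<le> L1 * norm (u - u') + L2 * norm (v - v')"
  using norm_diff_triangle_le[OF assms(1) assms(2)] .

lemma block_lipschitz_descent:
  fixes F :: "'u::real_inner \<Rightarrow> 'v::real_inner \<Rightarrow> real"
  assumes F_deriv: "\<And>u v. ((\<lambda>p. F (fst p) (snd p)) has_derivative
                       (\<lambda>d. gu u v \<bullet> fst d + gv u v \<bullet> snd d)) (at (u, v))"
    and Lip_uu: "\<And>u u' v. norm (gu u v - gu u' v) \<le> Lu * norm (u - u')"
    and Lip_uv: "\<And>u v v'. norm (gu u v - gu u v') \<le> Luv * norm (v - v')"
    and Lip_vv: "\<And>u v v'. norm (gv u v - gv u v') \<le> Lv * norm (v - v')"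
    and Lip_vu: "\<And>u u' v. norm (gv u v - gv u' v) \<le> Lvu * norm (u - u')"
  shows "F (u + U) (v + V) - F u v \<le> gu u v \<bullet> U + gv u v \<bullet> V
           + (Lu * (norm U)\<^sup>2 + (Luv + Lvu) * norm U * norm V + Lv * (norm V)\<^sup>2) / 2"
proof -
  define M where "M = Lu * (norm U)\<^sup>2 + (Luv + Lvu) * norm U * norm V + Lv * (norm V)\<^sup>2"
  define a where "a s = u + s *\<^sub>R U" for s :: real
  define b where "b s = v + s *\<^sub>R V" for s :: real
  \<comment> \<open>F along the segment minus the claimed quadratic model; the Lipschitz bounds make it nonincreasing\<close>
  define \<psi> where "\<psi> s = F (a s) (b s) - s * (gu u v \<bullet> U + gv u v \<bullet> V) - s\<^sup>2 / 2 * M" for s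
  define \<psi>' where "\<psi>' s = (gu (a s) (b s) - gu u v) \<bullet> U + (gv (a s) (b s) - gv u v) \<bullet> V - s * M" for s
  have "((\<lambda>s. F (a s) (b s)) has_real_derivative gu (a s) (b s) \<bullet> U + gv (a s) (b s) \<bullet> V) (at s)" for s
  proof -
    have "((\<lambda>s. (a s, b s)) has_derivative (\<lambda>r. (r *\<^sub>R U, r *\<^sub>R V))) (at s)"
      unfolding a_def b_def by (auto intro!: derivative_eq_intros simp: prod_eq_iff)
    from has_derivative_compose[OF this F_deriv] show ?thesis
      unfolding has_field_derivative_def fst_conv snd_conv
      by (rule has_derivative_eq_rhs) (auto simp: algebra_simps fun_eq_iff)
  qed
  then have deriv: "(\<psi> has_real_derivative \<psi>' s) (at s)" for s
    unfolding \<psi>_def \<psi>'_def by (auto intro!: derivative_eq_intros simp: inner_diff_left)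
  have decreasing: "\<psi>' s \<le> 0" if "0 \<le> s" for s
  proof -
    have "norm (gu (a s) (b s) - gu u v) \<le> s * (Lu * norm U + Luv * norm V)"
      using norm_diff_le_partial_lipschitz[OF Lip_uu Lip_uv, where u="a s" and v="b s" and u'=u and v'=v] that
      by (simp add: a_def b_def algebra_simps)
    moreover have "norm (gv (a s) (b s) - gv u v) \<le> s * (Lvu * norm U + Lv * norm V)"
      using norm_diff_le_partial_lipschitz[OF Lip_vu Lip_vv, where u="a s" and v="b s" and u'=u and v'=v] that
      by (simp add: a_def b_def algebra_simps)
    ultimately have "\<psi>' s \<le> s * (Lu * norm U + Luv * norm V) * norm U
                              + s * (Lvu * norm U + Lv * norm V) * norm V - s * M"
      unfolding \<psi>'_def
      using norm_cauchy_schwarz[of "gu (a s) (b s) - gu u v" U]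
        norm_cauchy_schwarz[of "gv (a s) (b s) - gv u v" V]
        mult_right_mono[of _ _ "norm U"] mult_right_mono[of _ _ "norm V"]
      by (smt (verit) norm_ge_zero)
    also have "\<dots> = 0"
      by (simp add: M_def algebra_simps power2_eq_square)
    finally show ?thesis .
  qed
  obtain s where "0 < s" "\<psi> 1 - \<psi> 0 = \<psi>' s"
    using MVT2[of 0 1 \<psi> \<psi>'] deriv by auto
  with decreasing[of s] have "\<psi> 1 \<le> \<psi> 0" by simp
  then show ?thesis
    by (simp add: \<psi>_def M_def a_def b_def)
qed

lemma power2_sum_le_weighted:
  fixes x y e :: real
  assumes "0 < e"
  shows "(x + y)\<^sup>2 \<le> (1 + e) * x\<^sup>2 + (1 + 1 / e) * y\<^sup>2"
proof -
  have "(1 + e) * x\<^sup>2 + (1 + 1 / e) * y\<^sup>2 - (x + y)\<^sup>2 = (e * x - y)\<^sup>2 / e"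
    using assms by (simp add: field_simps power2_eq_square)
  then show ?thesis
    using assms by (smt (verit) divide_nonneg_pos zero_le_power2)
qed

lemma mixed_term_le:
  fixes x y c Lu Lv Luv Lvu :: real
  assumes "0 \<le> x" "0 \<le> y" "0 \<le> c" "0 \<le> Lu" "0 \<le> Lv"
    and "Luv \<le> c * sqrt (Lu * Lv)" "Lvu \<le> c * sqrt (Lu * Lv)"
  shows "(Luv + Lvu) * x * y \<le> c * (Lu * x\<^sup>2 + Lv * y\<^sup>2)"
proof -
  have "(Luv + Lvu) * (x * y) \<le> (2 * c * sqrt (Lu * Lv)) * (x * y)"
    using assms by (intro mult_right_mono) auto
  also have "\<dots> = c * (2 * (sqrt Lu * x) * (sqrt Lv * y))"
    by (simp add: real_sqrt_mult algebra_simps)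
  also have "\<dots> \<le> c * ((sqrt Lu * x)\<^sup>2 + (sqrt Lv * y)\<^sup>2)"
    using assms sum_squares_bound by (intro mult_left_mono) auto
  also have "\<dots> = c * (Lu * x\<^sup>2 + Lv * y\<^sup>2)"
    using assms by (simp add: power_mult_distrib)
  finally show ?thesis
    by (simp add: mult.assoc)
qed

lemma inner_step_le_norms:
  fixes g W :: "'a::real_inner"
  assumes "0 \<le> a" "0 \<le> t" "0 \<le> c"
  shows "g \<bullet> (- a *\<^sub>R (t *\<^sub>R g + W)) + c / 2 * (norm (- a *\<^sub>R (t *\<^sub>R g + W)))\<^sup>2
           \<le> - a * t * (norm g)\<^sup>2 + a * norm g * norm W + c * a\<^sup>2 / 2 * (t * norm g + norm W)\<^sup>2"
proof -
  let ?U = "- a *\<^sub>R (t *\<^sub>R g + W)"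
  have "g \<bullet> ?U = - a * t * (norm g)\<^sup>2 + a * (- (g \<bullet> W))"
    by (simp add: inner_add_right power2_norm_eq_inner algebra_simps)
  also have "\<dots> \<le> - a * t * (norm g)\<^sup>2 + a * (norm g * norm W)"
    using assms Cauchy_Schwarz_ineq2[of g W]
    by (intro add_left_mono mult_left_mono) (auto simp: abs_le_iff)
  finally have "g \<bullet> ?U \<le> - a * t * (norm g)\<^sup>2 + a * norm g * norm W"
    by simp
  moreover have "norm ?U \<le> a * (t * norm g + norm W)"
    using assms norm_triangle_ineq[of "t *\<^sub>R g" W] by (simp add: mult_left_mono)
  then have "(norm ?U)\<^sup>2 \<le> a\<^sup>2 * (t * norm g + norm W)\<^sup>2"
    by (metis norm_ge_zero power_mono power_mult_distrib)
  then have "c / 2 * (norm ?U)\<^sup>2 \<le> c / 2 * (a\<^sup>2 * (t * norm g + norm W)\<^sup>2)"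
    using assms by (intro mult_left_mono) auto
  ultimately show ?thesis
    by (simp add: algebra_simps)
qed

lemma step_quadratic_le_quarter:
  fixes a t c n w :: real
  assumes "0 < a" "0 < t" "0 \<le> c * a * t" "c * a * t \<le> 1/4"
  shows "- a * t * n\<^sup>2 + a * n * w + c * a\<^sup>2 / 2 * (t * n + w)\<^sup>2
           \<le> (2 * c * a\<^sup>2 * t\<^sup>2 - a * t / 2) * n\<^sup>2 + 4 * a / (7 * t) * w\<^sup>2"
proof -
  define z where "z = c * a * t"
  define x where "x = t * n"
  have z: "0 \<le> z" "z \<le> 1/4"
    using assms by (auto simp: z_def)
  \<comment> \<open>after scaling by a/t the claim is a quadratic form in (x, w), nonnegative since z \<le> 1/4\<close>
  have "(1/2 + 3*z/2) * ((1/2 + 3*z/2) * x\<^sup>2 - (1 + z) * x * w + (4/7 - z/2) * w\<^sup>2)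
          = ((1/2 + 3*z/2) * x - (1 + z) / 2 * w)\<^sup>2 + (1/4 - z) * (z + 1/7) * w\<^sup>2"
    by (simp add: field_simps power2_eq_square)
  also have "\<dots> \<ge> 0"
    using z by simp
  finally have "0 \<le> (1/2 + 3*z/2) * x\<^sup>2 - (1 + z) * x * w + (4/7 - z/2) * w\<^sup>2"
    using z by (simp add: zero_le_mult_iff)
  then have normalized: "- x\<^sup>2 + x * w + z / 2 * (x + w)\<^sup>2 \<le> (2 * z - 1/2) * x\<^sup>2 + 4/7 * w\<^sup>2"
    by (simp add: algebra_simps power2_eq_square)
  have "- a * t * n\<^sup>2 + a * n * w + c * a\<^sup>2 / 2 * (t * n + w)\<^sup>2
          = a / t * (- x\<^sup>2 + x * w + z / 2 * (x + w)\<^sup>2)"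
    using assms by (simp add: x_def z_def field_simps power2_eq_square)
  also have "\<dots> \<le> a / t * ((2 * z - 1/2) * x\<^sup>2 + 4/7 * w\<^sup>2)"
    using normalized assms by (intro mult_left_mono) auto
  also have "\<dots> = (2 * c * a\<^sup>2 * t\<^sup>2 - a * t / 2) * n\<^sup>2 + 4 * a / (7 * t) * w\<^sup>2"
    using assms by (simp add: x_def z_def field_simps power2_eq_square)
  finally show ?thesis .
qed

lemma step_quadratic_le_half:
  fixes a t c n w :: real
  assumes "0 < a" "0 < t" "0 \<le> c * a * t" "c * a * t \<le> 1/2"
  shows "- a * t * n\<^sup>2 + a * n * w + c * a\<^sup>2 / 2 * (t * n + w)\<^sup>2
           \<le> (c * a\<^sup>2 * t\<^sup>2 - a * t / 2) * n\<^sup>2 + a / t * w\<^sup>2"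
proof -
  define z where "z = c * a * t"
  define x where "x = t * n"
  have z: "0 \<le> z" "z \<le> 1/2"
    using assms by (auto simp: z_def)
  have "(1/2 + z/2) * ((1/2 + z/2) * x\<^sup>2 - (1 + z) * x * w + (1 - z/2) * w\<^sup>2)
          = ((1/2 + z/2) * x - (1 + z) / 2 * w)\<^sup>2 + (1 + z) * (1 - 2 * z) / 4 * w\<^sup>2"
    by (simp add: field_simps power2_eq_square)
  also have "\<dots> \<ge> 0"
    using z by simp
  finally have "0 \<le> (1/2 + z/2) * x\<^sup>2 - (1 + z) * x * w + (1 - z/2) * w\<^sup>2"
    using z by (simp add: zero_le_mult_iff)
  then have normalized: "- x\<^sup>2 + x * w + z / 2 * (x + w)\<^sup>2 \<le> (z - 1/2) * x\<^sup>2 + w\<^sup>2"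
    by (simp add: algebra_simps power2_eq_square)
  have "- a * t * n\<^sup>2 + a * n * w + c * a\<^sup>2 / 2 * (t * n + w)\<^sup>2
          = a / t * (- x\<^sup>2 + x * w + z / 2 * (x + w)\<^sup>2)"
    using assms by (simp add: x_def z_def field_simps power2_eq_square)
  also have "\<dots> \<le> a / t * ((z - 1/2) * x\<^sup>2 + w\<^sup>2)"
    using normalized assms by (intro mult_left_mono) auto
  also have "\<dots> = (c * a\<^sup>2 * t\<^sup>2 - a * t / 2) * n\<^sup>2 + a / t * w\<^sup>2"
    using assms by (simp add: x_def z_def field_simps power2_eq_square)
  finally show ?thesis .
qed

lemma gradient_drift_term_le:
  fixes a b t Lu Lv Luv Lvu chi G1 G2 :: real
  assumes "0 \<le> a" "0 \<le> b" "1 \<le> t" "0 \<le> Lu" "0 \<le> Lv"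
    and Luv: "Luv\<^sup>2 \<le> chi\<^sup>2 * Lu * Lv" and Lvu: "Lvu\<^sup>2 \<le> chi\<^sup>2 * Lu * Lv"
  shows "2 * a / t * ((Lu * a * G1 + Luv * b * G2) * (t * (t - 1) / 2))\<^sup>2
         + 3 * b / (2 * t) * ((Lvu * a * G1 + Lv * b * G2) * (t * (t - 1) / 2))\<^sup>2
       \<le> t * (t + 1) * (2 * t + 1) * (a ^ 3 * G1\<^sup>2 * Lu\<^sup>2 + (1/3) * b ^ 3 * G2\<^sup>2 * Lv\<^sup>2
            + ((2/3) * a * G1\<^sup>2 + (1/2) * b * G2\<^sup>2) * a * b * chi\<^sup>2 * Lu * Lv)"
proof -
  define A where "A = Lu * a * G1"
  define B where "B = Luv * b * G2"
  define C where "C = Lvu * a * G1"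
  define D where "D = Lv * b * G2"
  define Q where "Q = a * A\<^sup>2 / 2 + a * B\<^sup>2 / 2 + 9/16 * b * C\<^sup>2 + 9/32 * b * D\<^sup>2"
  have "a / 2 * (A + B)\<^sup>2 \<le> a / 2 * (2 * A\<^sup>2 + 2 * B\<^sup>2)"
    using assms power2_sum_le_weighted[of 1 A B] by (intro mult_left_mono) auto
  moreover have "3 * b / 8 * (C + D)\<^sup>2 \<le> 3 * b / 8 * (3 * C\<^sup>2 + 3/2 * D\<^sup>2)"
    using assms power2_sum_le_weighted[of 2 C D] by (intro mult_left_mono) auto
  ultimately have AB_CD: "a / 2 * (A + B)\<^sup>2 + 3 * b / 8 * (C + D)\<^sup>2 \<le> 2 * Q"
    by (simp add: Q_def algebra_simps)
  have Q: "0 \<le> Q" "Q \<le> a ^ 3 * G1\<^sup>2 * Lu\<^sup>2 + (1/3) * b ^ 3 * G2\<^sup>2 * Lv\<^sup>2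
                       + ((2/3) * a * G1\<^sup>2 + (1/2) * b * G2\<^sup>2) * a * b * chi\<^sup>2 * Lu * Lv"
  proof -
    have "a * B\<^sup>2 = (a * b\<^sup>2 * G2\<^sup>2) * Luv\<^sup>2"
      by (simp add: B_def power_mult_distrib)
    also have "\<dots> \<le> (a * b\<^sup>2 * G2\<^sup>2) * (chi\<^sup>2 * Lu * Lv)"
      using Luv assms by (intro mult_left_mono) auto
    finally have B: "a * B\<^sup>2 \<le> (a * b\<^sup>2 * G2\<^sup>2) * (chi\<^sup>2 * Lu * Lv)" .
    have "b * C\<^sup>2 = (b * a\<^sup>2 * G1\<^sup>2) * Lvu\<^sup>2"
      by (simp add: C_def power_mult_distrib)
    also have "\<dots> \<le> (b * a\<^sup>2 * G1\<^sup>2) * (chi\<^sup>2 * Lu * Lv)"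
      using Lvu assms by (intro mult_left_mono) auto
    finally have C: "b * C\<^sup>2 \<le> (b * a\<^sup>2 * G1\<^sup>2) * (chi\<^sup>2 * Lu * Lv)" .
    have "0 \<le> a ^ 3 * G1\<^sup>2 * Lu\<^sup>2" "0 \<le> b ^ 3 * G2\<^sup>2 * Lv\<^sup>2"
      "0 \<le> (b * a\<^sup>2 * G1\<^sup>2) * (chi\<^sup>2 * Lu * Lv)"
      using assms by simp_all
    with B C show "Q \<le> a ^ 3 * G1\<^sup>2 * Lu\<^sup>2 + (1/3) * b ^ 3 * G2\<^sup>2 * Lv\<^sup>2
                       + ((2/3) * a * G1\<^sup>2 + (1/2) * b * G2\<^sup>2) * a * b * chi\<^sup>2 * Lu * Lv"
      by (simp add: Q_def A_def D_def power2_eq_square power3_eq_cube algebra_simps)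
    show "0 \<le> Q"
      using assms by (simp add: Q_def)
  qed
  have "2 * a / t * ((A + B) * (t * (t - 1) / 2))\<^sup>2 + 3 * b / (2 * t) * ((C + D) * (t * (t - 1) / 2))\<^sup>2
        = t * (t - 1)\<^sup>2 * (a / 2 * (A + B)\<^sup>2 + 3 * b / 8 * (C + D)\<^sup>2)"
    using assms by (simp add: field_simps power2_eq_square)
  also have "\<dots> \<le> t * (t - 1)\<^sup>2 * (2 * Q)"
    using AB_CD assms by (intro mult_left_mono) auto
  also have "\<dots> = t * ((t - 1)\<^sup>2 * 2) * Q"
    by simp
  also have "\<dots> \<le> t * ((t + 1) * (2 * t + 1)) * Q"
    using assms Q by (intro mult_right_mono mult_left_mono) (auto simp: algebra_simps power2_eq_square)
  also have "\<dots> = t * (t + 1) * (2 * t + 1) * Q"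
    by (simp only: mult.assoc)
  also have "\<dots> \<le> t * (t + 1) * (2 * t + 1) * (a ^ 3 * G1\<^sup>2 * Lu\<^sup>2 + (1/3) * b ^ 3 * G2\<^sup>2 * Lv\<^sup>2
            + ((2/3) * a * G1\<^sup>2 + (1/2) * b * G2\<^sup>2) * a * b * chi\<^sup>2 * Lu * Lv)"
    using assms Q by (intro mult_left_mono) auto
  finally show ?thesis
    by (simp add: A_def B_def C_def D_def)
qed

lemma regularizer_coefficient_le:
  fixes a b t Lu Lv Lvu chi :: real
  assumes "0 \<le> a" "0 \<le> b" "0 \<le> t" "0 \<le> Lu" "0 \<le> Lv" "0 \<le> chi"
    and Lvu: "Lvu\<^sup>2 \<le> chi\<^sup>2 * Lu * Lv"
    and step_u: "(1 + chi) * Lu * a * t \<le> 1/4" and step_v: "(1 + chi) * Lv * b * t \<le> 1/2"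
  shows "4 * a / 5 * (1 + Lu * a * t)\<^sup>2 + 3 * b * (Lvu * a * t)\<^sup>2 \<le> 5/4 * a"
proof -
  define z where "z = Lu * a * t"
  define y where "y = Lv * b * t"
  have z: "0 \<le> z" "chi * z \<le> 1/4 - z"
    using assms step_u by (simp_all add: z_def algebra_simps)
  then have z_le: "z \<le> 1/4"
    using assms by (smt (verit) mult_nonneg_nonneg)
  have y: "0 \<le> y" "chi * y \<le> 1/2 - y"
    using assms step_v by (simp_all add: y_def algebra_simps)
  then have chi_y: "chi * y \<le> 1/2"
    by linarith
  have "b * (Lvu * a * t)\<^sup>2 = (b * a\<^sup>2 * t\<^sup>2) * Lvu\<^sup>2"
    by (simp add: power_mult_distrib)
  also have "\<dots> \<le> (b * a\<^sup>2 * t\<^sup>2) * (chi\<^sup>2 * Lu * Lv)"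
    using Lvu assms by (intro mult_left_mono) auto
  also have "\<dots> = a * ((chi * z) * (chi * y))"
    by (simp add: z_def y_def power2_eq_square algebra_simps)
  also have "\<dots> \<le> a * ((1/4 - z) * (1/2))"
    using assms z z_le y chi_y by (intro mult_left_mono mult_mono) auto
  finally have "4 * a / 5 * (1 + Lu * a * t)\<^sup>2 + 3 * b * (Lvu * a * t)\<^sup>2
                  \<le> a * (4/5 * (1 + z)\<^sup>2 + 3 * ((1/4 - z) * (1/2)))"
    by (simp add: z_def algebra_simps)
  also have "\<dots> = a * (5/4 + 4/5 * ((z - 1/4) * (z + 3/8)))"
    by (simp add: field_simps power2_eq_square)
  also have "\<dots> \<le> a * (5/4 + 4/5 * 0)"
    using assms z z_le by (intro mult_left_mono add_left_mono mult_nonpos_nonneg) auto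
  finally show ?thesis
    by simp
qed

lemma sum_lessThan_real: "(\<Sum>l<n. real l) = real n * (real n - 1) / 2"
  by (induction n) (simp_all add: field_simps)

locale local_training =
  fixes F :: "'u::real_inner \<Rightarrow> 'v::real_inner \<Rightarrow> real"
    and gu :: "'u \<Rightarrow> 'v \<Rightarrow> 'u" and gv :: "'u \<Rightarrow> 'v \<Rightarrow> 'v" and gL :: "'u \<Rightarrow> 'u"
    and u0 :: 'u and v0 :: 'v
    and lam \<eta>u \<eta>v Lu Lv Luv Lvu G1 G2 :: real and \<tau> :: nat
  assumes F_deriv: "\<And>u v. ((\<lambda>p. F (fst p) (snd p)) has_derivative
                       (\<lambda>d. gu u v \<bullet> fst d + gv u v \<bullet> snd d)) (at (u, v))"
    and Lip_uu: "\<And>u u' v. norm (gu u v - gu u' v) \<le> Lu * norm (u - u')"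
    and Lip_uv: "\<And>u v v'. norm (gu u v - gu u v') \<le> Luv * norm (v - v')"
    and Lip_vv: "\<And>u v v'. norm (gv u v - gv u v') \<le> Lv * norm (v - v')"
    and Lip_vu: "\<And>u u' v. norm (gv u v - gv u' v) \<le> Lvu * norm (u - u')"
    and lam_nonneg: "0 \<le> lam" and tau_pos: "1 \<le> \<tau>"
    and eta_pos: "0 < \<eta>u" "0 < \<eta>v"
    and L_pos: "0 < Lu" "0 < Lv" "0 \<le> Luv" "0 \<le> Lvu"
    and grad_u_bounded: "\<And>l. l \<le> \<tau> \<Longrightarrow>
       norm (gu (fst (local_iter \<eta>u \<eta>v lam gu gv gL u0 v0 l)) (snd (local_iter \<eta>u \<eta>v lam gu gv gL u0 v0 l))) \<le> G1"
    and grad_v_bounded: "\<And>l. l \<le> \<tau> \<Longrightarrow>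
       norm (gv (fst (local_iter \<eta>u \<eta>v lam gu gv gL u0 v0 l)) (snd (local_iter \<eta>u \<eta>v lam gu gv gL u0 v0 l))) \<le> G2"
    and step_u: "\<eta>u \<le> 1 / (4 * real \<tau> * (1 + max Luv Lvu / sqrt (Lu * Lv)) * Lu)"
    and step_v: "\<eta>v \<le> 1 / (2 * real \<tau> * (1 + max Luv Lvu / sqrt (Lu * Lv)) * Lv)"
begin

definition chi :: real where
  "chi = max Luv Lvu / sqrt (Lu * Lv)"

definition iter_u :: "nat \<Rightarrow> 'u" where
  "iter_u l = fst (local_iter \<eta>u \<eta>v lam gu gv gL u0 v0 l)"

definition iter_v :: "nat \<Rightarrow> 'v" where
  "iter_v l = snd (local_iter \<eta>u \<eta>v lam gu gv gL u0 v0 l)"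

definition grad_u :: "nat \<Rightarrow> 'u" where
  "grad_u l = gu (iter_u l) (iter_v l)"

definition grad_v :: "nat \<Rightarrow> 'v" where
  "grad_v l = gv (iter_u l) (iter_v l)"

definition reg_norm :: "nat \<Rightarrow> real" where
  "reg_norm l = lam * norm (gL (iter_u l))"

definition reg_sum :: real where
  "reg_sum = (\<Sum>l<\<tau>. reg_norm l)"

definition drift_u :: 'u where
  "drift_u = (\<Sum>l<\<tau>. grad_u l - grad_u 0 + lam *\<^sub>R gL (iter_u l))"

definition drift_v :: 'v where
  "drift_v = (\<Sum>l<\<tau>. grad_v l - grad_v 0)"

definition A1 :: real where
  "A1 = real \<tau> * (real \<tau> + 1) * (2 * real \<tau> + 1) *
          (\<eta>u ^ 3 * G1\<^sup>2 * Lu\<^sup>2 + (1/3) * \<eta>v ^ 3 * G2\<^sup>2 * Lv\<^sup>2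
           + ((2/3) * \<eta>u * G1\<^sup>2 + (1/2) * \<eta>v * G2\<^sup>2) * \<eta>u * \<eta>v * chi\<^sup>2 * Lu * Lv)"

lemma chi_nonneg: "0 \<le> chi"
  using L_pos by (simp add: chi_def)

lemma cross_lipschitz_le_chi: "Luv \<le> chi * sqrt (Lu * Lv)" "Lvu \<le> chi * sqrt (Lu * Lv)"
  using L_pos by (simp_all add: chi_def)

lemma cross_lipschitz_sq_le_chi: "Luv\<^sup>2 \<le> chi\<^sup>2 * Lu * Lv" "Lvu\<^sup>2 \<le> chi\<^sup>2 * Lu * Lv"
proof -
  have "(chi * sqrt (Lu * Lv))\<^sup>2 = chi\<^sup>2 * Lu * Lv"
    using L_pos by (simp add: power_mult_distrib)
  then show "Luv\<^sup>2 \<le> chi\<^sup>2 * Lu * Lv" "Lvu\<^sup>2 \<le> chi\<^sup>2 * Lu * Lv"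
    using power_mono[OF cross_lipschitz_le_chi(1) L_pos(3), of 2]
      power_mono[OF cross_lipschitz_le_chi(2) L_pos(4), of 2] by simp_all
qed

lemma step_sizes_le: "(1 + chi) * Lu * \<eta>u * real \<tau> \<le> 1/4" "(1 + chi) * Lv * \<eta>v * real \<tau> \<le> 1/2"
proof -
  have "0 < 4 * real \<tau> * (1 + chi) * Lu" "0 < 2 * real \<tau> * (1 + chi) * Lv"
    using tau_pos chi_nonneg L_pos by simp_all
  then have "\<eta>u * (4 * real \<tau> * (1 + chi) * Lu) \<le> 1" "\<eta>v * (2 * real \<tau> * (1 + chi) * Lv) \<le> 1"
    using step_u step_v unfolding chi_def[symmetric] by (simp_all add: pos_le_divide_eq)
  then show "(1 + chi) * Lu * \<eta>u * real \<tau> \<le> 1/4" "(1 + chi) * Lv * \<eta>v * real \<tau> \<le> 1/2"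
    by (simp_all add: algebra_simps)
qed

lemma grad_bounded: "l \<le> \<tau> \<Longrightarrow> norm (grad_u l) \<le> G1" "l \<le> \<tau> \<Longrightarrow> norm (grad_v l) \<le> G2"
  using grad_u_bounded grad_v_bounded by (simp_all add: grad_u_def grad_v_def iter_u_def iter_v_def)

lemma iter_0: "iter_u 0 = u0" "iter_v 0 = v0"
  by (simp_all add: iter_u_def iter_v_def)

lemma iter_Suc:
  "iter_u (Suc l) = iter_u l - \<eta>u *\<^sub>R (grad_u l + lam *\<^sub>R gL (iter_u l))"
  "iter_v (Suc l) = iter_v l - \<eta>v *\<^sub>R grad_v l"
  by (simp_all add: iter_u_def iter_v_def grad_u_def grad_v_def split_beta Let_def)

lemma iter_eq_sum:
  "iter_u l = u0 - \<eta>u *\<^sub>R (\<Sum>j<l. grad_u j + lam *\<^sub>R gL (iter_u j))"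
  "iter_v l = v0 - \<eta>v *\<^sub>R (\<Sum>j<l. grad_v j)"
  by (induction l) (simp_all add: iter_0 iter_Suc algebra_simps)

lemma norm_iter_diff_le:
  assumes "l \<le> \<tau>"
  shows "norm (iter_u l - u0) \<le> \<eta>u * (real l * G1 + reg_sum)"
    and "norm (iter_v l - v0) \<le> \<eta>v * (real l * G2)"
proof -
  have "norm (\<Sum>j<l. grad_u j + lam *\<^sub>R gL (iter_u j)) \<le> (\<Sum>j<l. G1 + reg_norm j)"
  proof (rule sum_norm_le)
    fix j assume "j \<in> {..<l}"
    then have "norm (grad_u j) \<le> G1"
      using assms grad_bounded by simp
    then show "norm (grad_u j + lam *\<^sub>R gL (iter_u j)) \<le> G1 + reg_norm j"
      using lam_nonneg norm_triangle_ineq[of "grad_u j" "lam *\<^sub>R gL (iter_u j)"]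
      by (simp add: reg_norm_def)
  qed
  also have "\<dots> \<le> real l * G1 + reg_sum"
    unfolding reg_sum_def sum.distrib using assms lam_nonneg
    by (auto intro!: sum_mono2 simp: reg_norm_def)
  finally have "norm (\<Sum>j<l. grad_u j + lam *\<^sub>R gL (iter_u j)) \<le> real l * G1 + reg_sum" .
  moreover have "norm (iter_u l - u0) = \<eta>u * norm (\<Sum>j<l. grad_u j + lam *\<^sub>R gL (iter_u j))"
    using eta_pos by (subst iter_eq_sum(1)) simp
  ultimately show "norm (iter_u l - u0) \<le> \<eta>u * (real l * G1 + reg_sum)"
    using eta_pos by (simp add: mult_left_mono)
  have "norm (\<Sum>j<l. grad_v j) \<le> (\<Sum>j<l. G2)"
    using assms grad_bounded by (intro sum_norm_le) auto
  then show "norm (iter_v l - v0) \<le> \<eta>v * (real l * G2)"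
    using eta_pos by (simp add: iter_eq_sum(2) mult_left_mono)
qed

lemma norm_grad_diff_le:
  assumes "l \<le> \<tau>"
  shows "norm (grad_u l - grad_u 0) \<le> Lu * (\<eta>u * (real l * G1 + reg_sum)) + Luv * (\<eta>v * (real l * G2))"
    and "norm (grad_v l - grad_v 0) \<le> Lvu * (\<eta>u * (real l * G1 + reg_sum)) + Lv * (\<eta>v * (real l * G2))"
proof -
  note drift = norm_iter_diff_le[OF assms]
  have "norm (grad_u l - grad_u 0) \<le> Lu * norm (iter_u l - u0) + Luv * norm (iter_v l - v0)"
    using norm_diff_le_partial_lipschitz[OF Lip_uu Lip_uv] by (simp add: grad_u_def iter_0)
  also have "\<dots> \<le> Lu * (\<eta>u * (real l * G1 + reg_sum)) + Luv * (\<eta>v * (real l * G2))"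
    using drift L_pos by (intro add_mono mult_left_mono) auto
  finally show "norm (grad_u l - grad_u 0) \<le> \<dots>" .
  have "norm (grad_v l - grad_v 0) \<le> Lvu * norm (iter_u l - u0) + Lv * norm (iter_v l - v0)"
    using norm_diff_le_partial_lipschitz[OF Lip_vu Lip_vv] by (simp add: grad_v_def iter_0)
  also have "\<dots> \<le> Lvu * (\<eta>u * (real l * G1 + reg_sum)) + Lv * (\<eta>v * (real l * G2))"
    using drift L_pos by (intro add_mono mult_left_mono) auto
  finally show "norm (grad_v l - grad_v 0) \<le> \<dots>" .
qed

lemma iter_displacement:
  "iter_u \<tau> - u0 = - \<eta>u *\<^sub>R (real \<tau> *\<^sub>R grad_u 0 + drift_u)"
  "iter_v \<tau> - v0 = - \<eta>v *\<^sub>R (real \<tau> *\<^sub>R grad_v 0 + drift_v)"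
proof -
  have "(\<Sum>j<\<tau>. grad_u j + lam *\<^sub>R gL (iter_u j)) = drift_u + real \<tau> *\<^sub>R grad_u 0"
    by (simp add: drift_u_def sum.distrib sum_subtractf sum_constant_scaleR algebra_simps)
  then show "iter_u \<tau> - u0 = - \<eta>u *\<^sub>R (real \<tau> *\<^sub>R grad_u 0 + drift_u)"
    by (subst iter_eq_sum(1)) (simp add: algebra_simps)
  have "(\<Sum>j<\<tau>. grad_v j) = drift_v + real \<tau> *\<^sub>R grad_v 0"
    by (simp add: drift_v_def sum_subtractf sum_constant_scaleR)
  then show "iter_v \<tau> - v0 = - \<eta>v *\<^sub>R (real \<tau> *\<^sub>R grad_v 0 + drift_v)"
    by (simp add: iter_eq_sum(2) algebra_simps)
qed

lemma norm_drift_le: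
  "norm drift_u \<le> (Lu * \<eta>u * G1 + Luv * \<eta>v * G2) * (real \<tau> * (real \<tau> - 1) / 2)
                    + (1 + Lu * \<eta>u * real \<tau>) * reg_sum"
  "norm drift_v \<le> (Lvu * \<eta>u * G1 + Lv * \<eta>v * G2) * (real \<tau> * (real \<tau> - 1) / 2)
                    + Lvu * \<eta>u * real \<tau> * reg_sum"
proof -
  have "norm drift_u \<le> (\<Sum>l<\<tau>. (Lu * \<eta>u * G1 + Luv * \<eta>v * G2) * real l + Lu * \<eta>u * reg_sum + reg_norm l)"
    unfolding drift_u_def
  proof (rule sum_norm_le)
    fix l assume "l \<in> {..<\<tau>}"
    then show "norm (grad_u l - grad_u 0 + lam *\<^sub>R gL (iter_u l))
                 \<le> (Lu * \<eta>u * G1 + Luv * \<eta>v * G2) * real l + Lu * \<eta>u * reg_sum + reg_norm l"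
      using norm_grad_diff_le(1)[of l] lam_nonneg norm_triangle_ineq[of "grad_u l - grad_u 0" "lam *\<^sub>R gL (iter_u l)"]
      by (simp add: reg_norm_def algebra_simps)
  qed
  also have "\<dots> = (Lu * \<eta>u * G1 + Luv * \<eta>v * G2) * (real \<tau> * (real \<tau> - 1) / 2)
                    + (1 + Lu * \<eta>u * real \<tau>) * reg_sum"
    by (simp add: sum.distrib sum_distrib_left[symmetric] sum_lessThan_real reg_sum_def)
      (simp add: field_simps)
  finally show "norm drift_u \<le> \<dots>" .
  have "norm drift_v \<le> (\<Sum>l<\<tau>. (Lvu * \<eta>u * G1 + Lv * \<eta>v * G2) * real l + Lvu * \<eta>u * reg_sum)"
    unfolding drift_v_def
    using norm_grad_diff_le(2) by (intro sum_norm_le) (simp add: algebra_simps)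
  also have "\<dots> = (Lvu * \<eta>u * G1 + Lv * \<eta>v * G2) * (real \<tau> * (real \<tau> - 1) / 2)
                    + Lvu * \<eta>u * real \<tau> * reg_sum"
    by (simp add: sum.distrib sum_distrib_left[symmetric] sum_lessThan_real)
  finally show "norm drift_v \<le> \<dots>" .
qed

lemma drift_remainder_le:
  "4 * \<eta>u / (7 * real \<tau>) * (norm drift_u)\<^sup>2 + \<eta>v / real \<tau> * (norm drift_v)\<^sup>2
     \<le> A1 + 5/4 * \<eta>u * (\<Sum>l<\<tau>. (reg_norm l)\<^sup>2)"
proof -
  define t where "t = real \<tau>"
  define P where "P = (Lu * \<eta>u * G1 + Luv * \<eta>v * G2) * (t * (t - 1) / 2)"
  define Q where "Q = (Lvu * \<eta>u * G1 + Lv * \<eta>v * G2) * (t * (t - 1) / 2)"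
  define cu where "cu = 1 + Lu * \<eta>u * t"
  define cv where "cv = Lvu * \<eta>u * t"
  have t: "1 \<le> t"
    using tau_pos by (simp add: t_def)
  \<comment> \<open>the Young weights 5/2 and 1/2 are tuned to produce exactly A1 and the factor 5/4\<close>
  have "(norm drift_u)\<^sup>2 \<le> (P + cu * reg_sum)\<^sup>2"
    using norm_drift_le(1) by (simp add: P_def cu_def t_def power_mono)
  also have "\<dots> \<le> 7/2 * P\<^sup>2 + 7/5 * (cu * reg_sum)\<^sup>2"
    using power2_sum_le_weighted[of "5/2" P "cu * reg_sum"] by simp
  finally have u: "(norm drift_u)\<^sup>2 \<le> 7/2 * P\<^sup>2 + 7/5 * (cu * reg_sum)\<^sup>2" .
  have "(norm drift_v)\<^sup>2 \<le> (Q + cv * reg_sum)\<^sup>2"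
    using norm_drift_le(2) by (simp add: Q_def cv_def t_def power_mono)
  also have "\<dots> \<le> 3/2 * Q\<^sup>2 + 3 * (cv * reg_sum)\<^sup>2"
    using power2_sum_le_weighted[of "1/2" Q "cv * reg_sum"] by simp
  finally have v: "(norm drift_v)\<^sup>2 \<le> 3/2 * Q\<^sup>2 + 3 * (cv * reg_sum)\<^sup>2" .
  have "4 * \<eta>u / (7 * t) * (norm drift_u)\<^sup>2 + \<eta>v / t * (norm drift_v)\<^sup>2
        \<le> 4 * \<eta>u / (7 * t) * (7/2 * P\<^sup>2 + 7/5 * (cu * reg_sum)\<^sup>2) + \<eta>v / t * (3/2 * Q\<^sup>2 + 3 * (cv * reg_sum)\<^sup>2)"
    using u v eta_pos t by (intro add_mono mult_left_mono) auto
  also have "\<dots> = (2 * \<eta>u / t * P\<^sup>2 + 3 * \<eta>v / (2 * t) * Q\<^sup>2)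
                   + (4 * \<eta>u / 5 * cu\<^sup>2 + 3 * \<eta>v * cv\<^sup>2) * (reg_sum\<^sup>2 / t)"
    using t by (simp add: field_simps power2_eq_square)
  also have "\<dots> \<le> A1 + 5/4 * \<eta>u * (reg_sum\<^sup>2 / t)"
  proof (rule add_mono)
    show "2 * \<eta>u / t * P\<^sup>2 + 3 * \<eta>v / (2 * t) * Q\<^sup>2 \<le> A1"
      unfolding P_def Q_def A1_def t_def[symmetric]
      using gradient_drift_term_le[OF _ _ t _ _ cross_lipschitz_sq_le_chi] eta_pos L_pos by simp
    have "4 * \<eta>u / 5 * cu\<^sup>2 + 3 * \<eta>v * cv\<^sup>2 \<le> 5/4 * \<eta>u"
      unfolding cu_def cv_def t_def
      using regularizer_coefficient_le[OF _ _ _ _ _ chi_nonneg cross_lipschitz_sq_le_chi(2) step_sizes_le]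
        eta_pos L_pos by simp
    then show "(4 * \<eta>u / 5 * cu\<^sup>2 + 3 * \<eta>v * cv\<^sup>2) * (reg_sum\<^sup>2 / t) \<le> 5/4 * \<eta>u * (reg_sum\<^sup>2 / t)"
      using t by (intro mult_right_mono) auto
  qed
  also have "\<dots> \<le> A1 + 5/4 * \<eta>u * (\<Sum>l<\<tau>. (reg_norm l)\<^sup>2)"
    using sum_squared_le_sum_of_squares[of reg_norm "{..<\<tau>}"] t eta_pos
    by (intro add_left_mono mult_left_mono) (auto simp: reg_sum_def t_def divide_le_eq)
  finally show ?thesis
    by (simp add: t_def)
qed

lemma grad_0: "grad_u 0 = gu u0 v0" "grad_v 0 = gv u0 v0"
  by (simp_all add: grad_u_def grad_v_def iter_0)

lemma round_descent:
  "F (iter_u \<tau>) (iter_v \<tau>) - F u0 v0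
     \<le> (2 * (1 + chi) * Lu * \<eta>u\<^sup>2 * (real \<tau>)\<^sup>2 - (1/2) * \<eta>u * real \<tau>) * (norm (gu u0 v0))\<^sup>2
       + ((1 + chi) * Lv * \<eta>v\<^sup>2 * (real \<tau>)\<^sup>2 - (1/2) * \<eta>v * real \<tau>) * (norm (gv u0 v0))\<^sup>2
       + A1 + 5/4 * \<eta>u * (\<Sum>l<\<tau>. (reg_norm l)\<^sup>2)"
proof -
  define U where "U = iter_u \<tau> - u0"
  define V where "V = iter_v \<tau> - v0"
  define n where "n = norm (gu u0 v0)"
  define m where "m = norm (gv u0 v0)"
  have nonneg: "0 \<le> (1 + chi) * Lu * \<eta>u * real \<tau>" "0 \<le> (1 + chi) * Lv * \<eta>v * real \<tau>"
    using chi_nonneg L_pos eta_pos by simp_all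
  have tau: "0 < real \<tau>"
    using tau_pos by simp
  let ?t = "real \<tau>" and ?wu = "norm drift_u" and ?wv = "norm drift_v"
  have "F (iter_u \<tau>) (iter_v \<tau>) - F u0 v0
          \<le> gu u0 v0 \<bullet> U + gv u0 v0 \<bullet> V
             + (Lu * (norm U)\<^sup>2 + (Luv + Lvu) * norm U * norm V + Lv * (norm V)\<^sup>2) / 2"
    using block_lipschitz_descent[OF F_deriv Lip_uu Lip_uv Lip_vv Lip_vu, of u0 U v0 V]
    by (simp add: U_def V_def)
  also have "\<dots> \<le> (gu u0 v0 \<bullet> U + (1 + chi) * Lu / 2 * (norm U)\<^sup>2)
                 + (gv u0 v0 \<bullet> V + (1 + chi) * Lv / 2 * (norm V)\<^sup>2)"
    using mixed_term_le[of "norm U" "norm V" chi Lu Lv Luv Lvu] cross_lipschitz_le_chi chi_nonneg L_pos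
    by (simp add: field_simps)
  also have "\<dots> \<le> (- \<eta>u * ?t * n\<^sup>2 + \<eta>u * n * ?wu + (1 + chi) * Lu * \<eta>u\<^sup>2 / 2 * (?t * n + ?wu)\<^sup>2)
                 + (- \<eta>v * ?t * m\<^sup>2 + \<eta>v * m * ?wv + (1 + chi) * Lv * \<eta>v\<^sup>2 / 2 * (?t * m + ?wv)\<^sup>2)"
    unfolding U_def V_def iter_displacement grad_0 n_def m_def
    using eta_pos chi_nonneg L_pos by (intro add_mono inner_step_le_norms) auto
  also have "\<dots> \<le> ((2 * (1 + chi) * Lu * \<eta>u\<^sup>2 * ?t\<^sup>2 - \<eta>u * ?t / 2) * n\<^sup>2 + 4 * \<eta>u / (7 * ?t) * ?wu\<^sup>2)
                 + (((1 + chi) * Lv * \<eta>v\<^sup>2 * ?t\<^sup>2 - \<eta>v * ?t / 2) * m\<^sup>2 + \<eta>v / ?t * ?wv\<^sup>2)"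
    using add_mono[OF step_quadratic_le_quarter[OF eta_pos(1) tau nonneg(1) step_sizes_le(1)]
                      step_quadratic_le_half[OF eta_pos(2) tau nonneg(2) step_sizes_le(2)]]
    by (simp only: mult.assoc)
  finally show ?thesis
    using drift_remainder_le by (simp add: n_def m_def)
qed

end

theorem lemma2:
  fixes D :: "('x \<times> nat) set" and C :: nat
    and f :: "'x \<Rightarrow> nat \<Rightarrow> 'u::euclidean_space \<Rightarrow> 'v::euclidean_space \<Rightarrow> real"
    and h :: "'x \<Rightarrow> 'u \<Rightarrow> 'h::euclidean_space"
    and Dh :: "'x \<Rightarrow> 'u \<Rightarrow> 'u \<Rightarrow> 'h"
    and \<Omega> :: "nat \<Rightarrow> 'h"
    and gu :: "'u \<Rightarrow> 'v \<Rightarrow> 'u" and gv :: "'u \<Rightarrow> 'v \<Rightarrow> 'v" and gL :: "'u \<Rightarrow> 'u"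
    and u0 :: 'u and v0 :: 'v
    and lam \<eta>u \<eta>v Lu Lv Luv Lvu G1 G2 \<theta> \<sigma> :: real and \<tau> :: nat
  assumes finD: "finite D" and neD: "D \<noteq> {}"
    and labels: "\<forall>s\<in>D. snd s \<in> {1..C}"
    and lam: "lam \<ge> 0" and tau: "\<tau> \<ge> 1"
    and eta_pos: "\<eta>u > 0" "\<eta>v > 0"
    and L_pos: "Lu > 0" "Lv > 0" "Luv \<ge> 0" "Lvu \<ge> 0"
    \<comment> \<open>(i) F_k continuously differentiable with partial gradients gu, gv\<close>
    and F_deriv: "\<And>u v. ((\<lambda>p. emp_loss D f (fst p) (snd p)) has_derivative
                     (\<lambda>d. gu u v \<bullet> fst d + gv u v \<bullet> snd d)) (at (u, v))"
    and gu_cont: "continuous_on UNIV (\<lambda>p. gu (fst p) (snd p))"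
    and gv_cont: "continuous_on UNIV (\<lambda>p. gv (fst p) (snd p))"
    and Lip_uu: "\<And>u u' v. norm (gu u v - gu u' v) \<le> Lu * norm (u - u')"
    and Lip_uv: "\<And>u v v'. norm (gu u v - gu u v') \<le> Luv * norm (v - v')"
    and Lip_vv: "\<And>u v v'. norm (gv u v - gv u v') \<le> Lv * norm (v - v')"
    and Lip_vu: "\<And>u u' v. norm (gv u v - gv u' v) \<le> Lvu * norm (u - u')"
    \<comment> \<open>(ii) gradient bounds over all local iterates\<close>
    and G1: "\<And>l. l \<le> \<tau> \<Longrightarrow>
       (norm (gu (fst (local_iter \<eta>u \<eta>v lam gu gv gL u0 v0 l)) (snd (local_iter \<eta>u \<eta>v lam gu gv gL u0 v0 l))))\<^sup>2 \<le> G1\<^sup>2"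
    and G2: "\<And>l. l \<le> \<tau> \<Longrightarrow>
       (norm (gv (fst (local_iter \<eta>u \<eta>v lam gu gv gL u0 v0 l)) (snd (local_iter \<eta>u \<eta>v lam gu gv gL u0 v0 l))))\<^sup>2 \<le> G2\<^sup>2"
    \<comment> \<open>(iii) feature extractor: differentiable with bounded Jacobian and bounded output\<close>
    and h_deriv: "\<And>x u. (h x has_derivative Dh x u) (at u)"
    and Dh_bound: "\<And>x u. (onorm (Dh x u))\<^sup>2 \<le> \<theta>\<^sup>2"
    and h_bound: "\<And>x u. (norm (h x u))\<^sup>2 \<le> \<sigma>\<^sup>2"
    \<comment> \<open>gL is the gradient of the knowledge loss L_k\<close>
    and L_grad: "\<And>u. (knowledge_loss D C h \<Omega> has_derivative (\<lambda>d. gL u \<bullet> d)) (at u)"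
    \<comment> \<open>step sizes\<close>
    and eta_u: "\<eta>u \<le> 1 / (4 * real \<tau> * (1 + max Luv Lvu / sqrt (Lu * Lv)) * Lu)"
    and eta_v: "\<eta>v \<le> 1 / (2 * real \<tau> * (1 + max Luv Lvu / sqrt (Lu * Lv)) * Lv)"
  shows "let chi = max Luv Lvu / sqrt (Lu * Lv);
             it = local_iter \<eta>u \<eta>v lam gu gv gL u0 v0;
             F = emp_loss D f;
             t = real \<tau>;
             A1 = t * (t + 1) * (2 * t + 1) *
                  (\<eta>u ^ 3 * G1\<^sup>2 * Lu\<^sup>2 + (1/3) * \<eta>v ^ 3 * G2\<^sup>2 * Lv\<^sup>2
                   + ((2/3) * \<eta>u * G1\<^sup>2 + (1/2) * \<eta>v * G2\<^sup>2) * \<eta>u * \<eta>v * chi\<^sup>2 * Lu * Lv)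
         in F (fst (it \<tau>)) (snd (it \<tau>)) - F u0 v0
            \<le> (2 * (1 + chi) * Lu * \<eta>u\<^sup>2 * t\<^sup>2 - (1/2) * \<eta>u * t) * (norm (gu u0 v0))\<^sup>2
             + ((1 + chi) * Lv * \<eta>v\<^sup>2 * t\<^sup>2 - (1/2) * \<eta>v * t) * (norm (gv u0 v0))\<^sup>2
             + A1
             + (5/4) * \<eta>u * lam\<^sup>2 * (\<Sum>l<\<tau>. (norm (gL (fst (it l))))\<^sup>2)
             + 2 * \<eta>u\<^sup>2 * lam\<^sup>2 * (3 * \<eta>u * Lu\<^sup>2 + 2 * \<eta>v * chi\<^sup>2 * Lu * Lv)
                 * (\<Sum>l<\<tau>. (t - real l) * (norm (gL (fst (it l))))\<^sup>2)"
proof -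
  \<comment> \<open>only (i) without continuity, (ii) and the step sizes are used: gL may be any vector field\<close>
  interpret local_training "emp_loss D f" gu gv gL u0 v0 lam \<eta>u \<eta>v Lu Lv Luv Lvu "\<bar>G1\<bar>" "\<bar>G2\<bar>" \<tau>
    using assms by unfold_locales (simp_all add: abs_le_square_iff[symmetric])
  have reg: "5/4 * \<eta>u * (\<Sum>l<\<tau>. (reg_norm l)\<^sup>2) = (5/4) * \<eta>u * lam\<^sup>2 * (\<Sum>l<\<tau>. (norm (gL (iter_u l)))\<^sup>2)"
    by (simp add: reg_norm_def power_mult_distrib sum_distrib_left mult.assoc)
  have extra: "0 \<le> 2 * \<eta>u\<^sup>2 * lam\<^sup>2 * (3 * \<eta>u * Lu\<^sup>2 + 2 * \<eta>v * chi\<^sup>2 * Lu * Lv)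
                     * (\<Sum>l<\<tau>. (real \<tau> - real l) * (norm (gL (iter_u l)))\<^sup>2)"
    using eta_pos L_pos by (intro mult_nonneg_nonneg sum_nonneg) auto
  show ?thesis
    using round_descent[unfolded reg A1_def chi_def iter_u_def iter_v_def power2_abs] extra[unfolded chi_def iter_u_def]
    unfolding Let_def by linarith
qed

end
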